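(* Let $A,B$ be commutative rings, $f:A\to B$ a ring homomorphism, $J$ an ideal of $B$, $\mathfrak a$ an ideal of $A$, $\mathfrak p$ a prime ideal of $A$ and $\mathfrak q$ a prime ideal of $B$. Then (1) $\mathfrak a^e\subseteq\mathfrak p^{\prime_f}$ if and only if $\mathfrak a\subseteq\mathfrak p$; (2) $\mathfrak a^e\subseteq\overline{\mathfrak q}^f$ if and only if $f(\mathfrak a)\subseteq\mathfrak q$.
   Context: $A\bowtie^fJ=\{(a,f(a)+j): a\in A,\ j\in J\}\subseteq A\times B$; $\iota_A(x)=(x,f(x))$ and $\mathfrak a^e=\iota_A(\mathfrak a)(A\bowtie^fJ)$. For a prime $\mathfrak p$ of $A$, $\mathfrak p^{\prime_f}=\{(p,f(p)+j): p\in\mathfrak p,\ j\in J\}$; for a prime $\mathfrak q$ of $B$, $\overline{\mathfrak q}^f=\{(a,f(a)+j): a\in A,\ j\in J,\ f(a)+j\in\mathfrak q\}$. *)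

theory Defs
  imports "HOL-Algebra.Algebra"
begin

definition amalg :: "('a, 'm) ring_scheme \<Rightarrow> ('b, 'n) ring_scheme \<Rightarrow> ('a \<Rightarrow> 'b) \<Rightarrow> 'b set
                      \<Rightarrow> ('a \<times> 'b) ring" where
  "amalg A B f J =
     \<lparr> carrier = {(a, f a \<oplus>\<^bsub>B\<^esub> j) | a j. a \<in> carrier A \<and> j \<in> J},
       monoid.mult = (\<lambda>x y. (fst x \<otimes>\<^bsub>A\<^esub> fst y, snd x \<otimes>\<^bsub>B\<^esub> snd y)),
       monoid.one = (\<one>\<^bsub>A\<^esub>, \<one>\<^bsub>B\<^esub>),
       ring.zero = (\<zero>\<^bsub>A\<^esub>, \<zero>\<^bsub>B\<^esub>),
       ring.add = (\<lambda>x y. (fst x \<oplus>\<^bsub>A\<^esub> fst y, snd x \<oplus>\<^bsub>B\<^esub> snd y)) \<rparr>"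

definition iotaA :: "('a \<Rightarrow> 'b) \<Rightarrow> 'a \<Rightarrow> 'a \<times> 'b" where
  "iotaA f x = (x, f x)"

text \<open>Extension a^e = \<iota>_A(a)(A \<bowtie>^f J): the ideal of A \<bowtie>^f J generated by \<iota>_A(a).\<close>
definition ext_ideal :: "('a, 'm) ring_scheme \<Rightarrow> ('b, 'n) ring_scheme \<Rightarrow> ('a \<Rightarrow> 'b) \<Rightarrow> 'b set
                         \<Rightarrow> 'a set \<Rightarrow> ('a \<times> 'b) set" where
  "ext_ideal A B f J I = genideal (amalg A B f J) (iotaA f ` I)"

definition prime_prime_f :: "('a, 'm) ring_scheme \<Rightarrow> ('b, 'n) ring_scheme \<Rightarrow> ('a \<Rightarrow> 'b) \<Rightarrow> 'b set
                         \<Rightarrow> 'a set \<Rightarrow> ('a \<times> 'b) set" where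
  "prime_prime_f A B f J P = {(p, f p \<oplus>\<^bsub>B\<^esub> j) | p j. p \<in> P \<and> j \<in> J}"

definition prime_bar_f :: "('a, 'm) ring_scheme \<Rightarrow> ('b, 'n) ring_scheme \<Rightarrow> ('a \<Rightarrow> 'b) \<Rightarrow> 'b set
                         \<Rightarrow> 'b set \<Rightarrow> ('a \<times> 'b) set" where
  "prime_bar_f A B f J Q =
     {(a, f a \<oplus>\<^bsub>B\<^esub> j) | a j. a \<in> carrier A \<and> j \<in> J \<and> f a \<oplus>\<^bsub>B\<^esub> j \<in> Q}"

end

theory Submission
  imports Defs
begin

(* A \<bowtie>^f J is a subring of A \<times> B on which both projections are ring homomorphisms.
   The sets \<pp>'_f and (bar \<qq>)^f are precisely the preimages of \<pp> under the first and of \<qq>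
   under the second projection, hence ideals of A \<bowtie>^f J.  An ideal contains the ideal
   generated by iota_A(\<aa>) iff it contains iota_A(\<aa>), and iota_A(x) = (x, f x) lies in these
   preimages iff x \<in> \<pp>, respectively f x \<in> \<qq>. *)

lemma amalg_eq_RDirProd:
  "amalg A B f J = (RDirProd A B)\<lparr>carrier := carrier (amalg A B f J)\<rparr>"
  by (simp add: amalg_def RDirProd_def DirProd_def monoid.defs case_prod_beta')

lemma a_inv_RDirProd:
  assumes "ring A" "ring B" "a \<in> carrier A" "b \<in> carrier B"
  shows "\<ominus>\<^bsub>RDirProd A B\<^esub> (a, b) = (\<ominus>\<^bsub>A\<^esub> a, \<ominus>\<^bsub>B\<^esub> b)"
  unfolding a_inv_def RDirProd_add_monoid
  using assms by (simp add: ring.is_abelian_group abelian_group.a_group)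


lemma RDirProd_simps:
  "(a, b) \<oplus>\<^bsub>RDirProd A B\<^esub> (c, d) = (a \<oplus>\<^bsub>A\<^esub> c, b \<oplus>\<^bsub>B\<^esub> d)"
  "(a, b) \<otimes>\<^bsub>RDirProd A B\<^esub> (c, d) = (a \<otimes>\<^bsub>A\<^esub> c, b \<otimes>\<^bsub>B\<^esub> d)"
  "\<one>\<^bsub>RDirProd A B\<^esub> = (\<one>\<^bsub>A\<^esub>, \<one>\<^bsub>B\<^esub>)"
  by (simp_all add: RDirProd_def DirProd_def monoid.defs)

context
  fixes A :: "('a, 'm) ring_scheme" and B :: "('b, 'n) ring_scheme" and f and J
  assumes hom: "ring_hom_ring A B f" and J: "ideal J B"
begin

interpretation ring_hom_ring A B f by (rule hom)
interpretation J: ideal J B by (rule J)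

lemma carrier_amalg_iff:
  "x \<in> carrier (amalg A B f J) \<longleftrightarrow> (\<exists>a\<in>carrier A. \<exists>j\<in>J. x = (a, f a \<oplus>\<^bsub>B\<^esub> j))"
  by (auto simp: amalg_def)

lemma subring_amalg: "subring (carrier (amalg A B f J)) (RDirProd A B)"
proof -
  interpret P: ring "RDirProd A B" by (rule RDirProd_ring) unfold_locales
  have mem: "(a, f a \<oplus>\<^bsub>B\<^esub> j) \<in> carrier (amalg A B f J)" if "a \<in> carrier A" "j \<in> J" for a j
    using that by (auto simp: carrier_amalg_iff)
  show ?thesis
  proof (rule P.subringI)
    show "carrier (amalg A B f J) \<subseteq> carrier (RDirProd A B)"
      by (auto simp: carrier_amalg_iff RDirProd_carrier)
    show "\<one>\<^bsub>RDirProd A B\<^esub> \<in> carrier (amalg A B f J)"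
      using mem[of "\<one>\<^bsub>A\<^esub>" "\<zero>\<^bsub>B\<^esub>"] by (simp add: RDirProd_simps)
  next
    fix x assume "x \<in> carrier (amalg A B f J)"
    then obtain a j where x: "x = (a, f a \<oplus>\<^bsub>B\<^esub> j)" "a \<in> carrier A" "j \<in> J"
      by (auto simp: carrier_amalg_iff)
    have neg: "\<ominus>\<^bsub>RDirProd A B\<^esub> x = (\<ominus>\<^bsub>A\<^esub> a, f (\<ominus>\<^bsub>A\<^esub> a) \<oplus>\<^bsub>B\<^esub> \<ominus>\<^bsub>B\<^esub> j)"
      using x by (simp add: a_inv_RDirProd R.ring_axioms S.ring_axioms S.minus_add)
    show "\<ominus>\<^bsub>RDirProd A B\<^esub> x \<in> carrier (amalg A B f J)"
      unfolding neg using x by (intro mem) (simp_all add: J.a_inv_closed)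
  next
    fix x y assume "x \<in> carrier (amalg A B f J)" "y \<in> carrier (amalg A B f J)"
    then obtain a j b k where x: "x = (a, f a \<oplus>\<^bsub>B\<^esub> j)" "a \<in> carrier A" "j \<in> J"
      and y: "y = (b, f b \<oplus>\<^bsub>B\<^esub> k)" "b \<in> carrier A" "k \<in> J"
      by (auto simp: carrier_amalg_iff)
    have jk: "j \<in> carrier B" "k \<in> carrier B" using x(3) y(3) by (auto simp: J.Icarr)
    have add: "x \<oplus>\<^bsub>RDirProd A B\<^esub> y = (a \<oplus>\<^bsub>A\<^esub> b, f (a \<oplus>\<^bsub>A\<^esub> b) \<oplus>\<^bsub>B\<^esub> (j \<oplus>\<^bsub>B\<^esub> k))"
      using x y jk by (simp add: RDirProd_simps S.a_ac)
    show "x \<oplus>\<^bsub>RDirProd A B\<^esub> y \<in> carrier (amalg A B f J)"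
      unfolding add using x y by (intro mem) (simp_all add: J.a_closed)
    have mult: "x \<otimes>\<^bsub>RDirProd A B\<^esub> y
        = (a \<otimes>\<^bsub>A\<^esub> b, f (a \<otimes>\<^bsub>A\<^esub> b) \<oplus>\<^bsub>B\<^esub> (f a \<otimes>\<^bsub>B\<^esub> k \<oplus>\<^bsub>B\<^esub> j \<otimes>\<^bsub>B\<^esub> (f b \<oplus>\<^bsub>B\<^esub> k)))"
      using x y jk by (simp add: RDirProd_simps S.l_distr S.r_distr S.a_ac)
    have "f a \<otimes>\<^bsub>B\<^esub> k \<oplus>\<^bsub>B\<^esub> j \<otimes>\<^bsub>B\<^esub> (f b \<oplus>\<^bsub>B\<^esub> k) \<in> J"
      using x y jk by (simp add: J.a_closed J.I_l_closed J.I_r_closed)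
    then show "x \<otimes>\<^bsub>RDirProd A B\<^esub> y \<in> carrier (amalg A B f J)"
      unfolding mult using x y by (intro mem) simp_all
  qed
qed

lemma ring_amalg: "ring (amalg A B f J)"
  by (subst amalg_eq_RDirProd)
    (rule ring.subring_is_ring[OF RDirProd_ring subring_amalg], unfold_locales)

lemma ring_hom_ring_fst_amalg: "ring_hom_ring (amalg A B f J) A fst"
  by (rule ring_hom_ringI2[OF ring_amalg R.ring_axioms]) (auto intro!: ring_hom_memI simp: amalg_def)

lemma ring_hom_ring_snd_amalg: "ring_hom_ring (amalg A B f J) B snd"
  by (rule ring_hom_ringI2[OF ring_amalg S.ring_axioms])
    (auto intro!: ring_hom_memI simp: amalg_def J.Icarr)

lemma prime_prime_f_eq_vimage_fst:
  "P \<subseteq> carrier A \<Longrightarrow> prime_prime_f A B f J P = {x \<in> carrier (amalg A B f J). fst x \<in> P}"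
  by (auto simp: prime_prime_f_def carrier_amalg_iff)

lemma prime_bar_f_eq_vimage_snd:
  "prime_bar_f A B f J Q = {x \<in> carrier (amalg A B f J). snd x \<in> Q}"
  by (auto simp: prime_bar_f_def carrier_amalg_iff)

lemma ideal_prime_prime_f: "ideal P A \<Longrightarrow> ideal (prime_prime_f A B f J P) (amalg A B f J)"
  by (simp add: prime_prime_f_eq_vimage_fst ideal.Icarr subsetI
      ring_hom_ring.ideal_vimage[OF ring_hom_ring_fst_amalg])

lemma ideal_prime_bar_f: "ideal Q B \<Longrightarrow> ideal (prime_bar_f A B f J Q) (amalg A B f J)"
  by (simp add: prime_bar_f_eq_vimage_snd ring_hom_ring.ideal_vimage[OF ring_hom_ring_snd_amalg])

lemma iotaA_in_carrier_amalg: "a \<in> carrier A \<Longrightarrow> iotaA f a \<in> carrier (amalg A B f J)"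
  using carrier_amalg_iff[of "iotaA f a"] by (auto simp: iotaA_def intro: J.zero_closed)

lemma ext_ideal_subset_iff:
  assumes "I \<subseteq> carrier A" "ideal K (amalg A B f J)"
  shows "ext_ideal A B f J I \<subseteq> K \<longleftrightarrow> iotaA f ` I \<subseteq> K"
  unfolding ext_ideal_def
  using assms iotaA_in_carrier_amalg by (intro ring.Idl_subset_ideal[OF ring_amalg]) auto

end

theorem lemma4p3:
  fixes A :: "('a, 'm) ring_scheme" and B :: "('b, 'n) ring_scheme"
  assumes "cring A" and "cring B"
    and "f \<in> ring_hom A B"
    and "ideal J B"
    and "ideal \<aa> A"
    and "primeideal P A"
    and "primeideal Q B"
  shows "(ext_ideal A B f J \<aa> \<subseteq> prime_prime_f A B f J P \<longleftrightarrow> \<aa> \<subseteq> P)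
       \<and> (ext_ideal A B f J \<aa> \<subseteq> prime_bar_f A B f J Q \<longleftrightarrow> f ` \<aa> \<subseteq> Q)"
proof -
  have hom: "ring_hom_ring A B f"
    using assms(1-3) by (intro ring_hom_ringI2) (simp_all add: cring.axioms(1))
  note J = \<open>ideal J B\<close>
  have P: "ideal P A" and Q: "ideal Q B"
    using assms(6,7) by (simp_all add: primeideal.axioms(1))
  have "\<aa> \<subseteq> carrier A" and "P \<subseteq> carrier A"
    using assms(5) P by (simp_all add: ideal.Icarr subsetI)
  note in_T = iotaA_in_carrier_amalg[OF hom J]
    and sub_iff = ext_ideal_subset_iff[OF hom J \<open>\<aa> \<subseteq> carrier A\<close>]
  have "ext_ideal A B f J \<aa> \<subseteq> prime_prime_f A B f J P \<longleftrightarrow> iotaA f ` \<aa> \<subseteq> prime_prime_f A B f J P"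
    by (rule sub_iff[OF ideal_prime_prime_f[OF hom J P]])
  also have "\<dots> \<longleftrightarrow> \<aa> \<subseteq> P"
    unfolding prime_prime_f_eq_vimage_fst[OF hom J \<open>P \<subseteq> carrier A\<close>]
    using \<open>\<aa> \<subseteq> carrier A\<close> in_T by (auto simp: iotaA_def)
  finally have "ext_ideal A B f J \<aa> \<subseteq> prime_prime_f A B f J P \<longleftrightarrow> \<aa> \<subseteq> P" .
  moreover have "ext_ideal A B f J \<aa> \<subseteq> prime_bar_f A B f J Q \<longleftrightarrow> iotaA f ` \<aa> \<subseteq> prime_bar_f A B f J Q"
    by (rule sub_iff[OF ideal_prime_bar_f[OF hom J Q]])
  moreover have "iotaA f ` \<aa> \<subseteq> prime_bar_f A B f J Q \<longleftrightarrow> f ` \<aa> \<subseteq> Q"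
    unfolding prime_bar_f_eq_vimage_snd[OF hom J]
    using \<open>\<aa> \<subseteq> carrier A\<close> in_T by (auto simp: iotaA_def)
  ultimately show ?thesis by blast
qed

end
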